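(* Let $a_1,\dots,a_\ell,c_1,\dots,c_s,m,b_1,\dots,b_t$ be integers $\ge 2$ with $a_\ell>2$ when $\ell\ge1$, where $\ell,s,t\ge 0$. For each integer $k\ge 0$ let $p=p(k)>q=q(k)>0$ be the coprime integers with $$\frac{p}{q}=\left[a_1,\dots,a_\ell,[2]^k,c_1,\dots,c_s,m+k,b_1,\dots,b_t\right],$$ and let $q^{-1}=q^{-1}(k)$ be the inverse of $q$ modulo $p$ with $0<q^{-1}<p$. Then there are constants $d_i,e_i,f_i$ ($i=1,2,3$), independent of $k$, with $d_1\neq 0$, such that for all $k\ge 0$: $p=d_1k^2+e_1k+f_1$, $q=d_2k^2+e_2k+f_2$, $q^{-1}=d_3k^2+e_3k+f_3$, and $$\frac{d_1}{d_2}=\begin{cases}[a_1,\dots,a_{\ell-1},a_\ell-1] & \ell\ge1,\\ 1 & \ell=0,\end{cases}\qquad \frac{d_1}{d_3}=\begin{cases}[b_t,\dots,b_1] & t\ge1,\\ \infty\ (\text{i.e. } d_3=0) & t=0.\end{cases}$$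
   Context: $[x_1,\dots,x_n]=x_1-1/(x_2-1/(\cdots-1/x_n))$ denotes the Hirzebruch–Jung continued fraction; $[2]^k$ denotes $k$ consecutive entries equal to $2$. *)

theory Defs
  imports "HOL-Number_Theory.Number_Theory"
begin

text \<open>Hirzebruch-Jung continued fraction [x1,...,xn] = x1 - 1/(x2 - 1/(... - 1/xn)).
  The value on the empty list is an irrelevant convention (never used).\<close>
fun hjcf :: "rat list \<Rightarrow> rat" where
  "hjcf [] = 0"
| "hjcf [x] = x"
| "hjcf (x # y # ys) = x - 1 / hjcf (y # ys)"

end

theory Submission
  imports Defs
begin

text \<open>The numerator and denominator of \<open>[x\<^sub>1,\<dots>,x\<^sub>n]\<close> form the first column of the
  product of the matrices \<open>[[x\<^sub>i, -1], [1, 0]]\<close>, and since this product has determinant 1,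
  its top-right entry is, up to sign, the inverse of the denominator modulo the numerator.
  Inserting \<open>[2]\<^sup>k\<close> and replacing \<open>m\<close> by \<open>m + k\<close> turns two factors into matrices affine in
  \<open>k\<close> with rank-one linear parts, so every entry of the product is quadratic in \<open>k\<close> and the
  coefficient of \<open>k\<^sup>2\<close> is a column determined by \<open>a\<close> times a row determined by \<open>b\<close>.  The
  column is the first column of the product for \<open>[a\<^sub>1,\<dots>,a\<^sub>\<ell> - 1]\<close> and the row is, up to
  sign, the first column of the product for \<open>[b\<^sub>t,\<dots>,b\<^sub>1]\<close>, which gives the two ratios.\<close>

type_synonym mat2 = "int \<times> int \<times> int \<times> int"

text \<open>\<open>(P, Q, R, S)\<close> encodes the matrix \<open>[[P, -R], [Q, -S]]\<close>; with these signs all entries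
  of \<open>hj_mat xs\<close> are nonnegative when \<open>xs\<close> is nonempty with entries \<open>\<ge> 2\<close>.\<close>

fun mat2_mult :: "mat2 \<Rightarrow> mat2 \<Rightarrow> mat2" where
  "mat2_mult (P1, Q1, R1, S1) (P2, Q2, R2, S2) =
     (P1 * P2 - R1 * Q2, Q1 * P2 - S1 * Q2, P1 * R2 - R1 * S2, Q1 * R2 - S1 * S2)"

fun mat2_add :: "mat2 \<Rightarrow> mat2 \<Rightarrow> mat2" where
  "mat2_add (P1, Q1, R1, S1) (P2, Q2, R2, S2) = (P1 + P2, Q1 + Q2, R1 + R2, S1 + S2)"

fun mat2_smult :: "int \<Rightarrow> mat2 \<Rightarrow> mat2" where
  "mat2_smult k (P, Q, R, S) = (k * P, k * Q, k * R, k * S)"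

fun mat2_transpose :: "mat2 \<Rightarrow> mat2" where
  "mat2_transpose (P, Q, R, S) = (P, R, Q, S)"

lemma mat2_mult_one_left [simp]: "mat2_mult (1, 0, 0, -1) u = u"
  by (cases u rule: prod_cases4) simp

lemma mat2_mult_assoc: "mat2_mult (mat2_mult u v) w = mat2_mult u (mat2_mult v w)"
  by (cases u rule: prod_cases4; cases v rule: prod_cases4; cases w rule: prod_cases4)
    (simp add: algebra_simps)

lemma mat2_transpose_mult:
  "mat2_transpose (mat2_mult u v) = mat2_mult (mat2_transpose v) (mat2_transpose u)"
  by (cases u rule: prod_cases4; cases v rule: prod_cases4) (simp add: algebra_simps)

fun hj_mat :: "int list \<Rightarrow> mat2" where
  "hj_mat [] = (1, 0, 0, -1)"
| "hj_mat (x # xs) = mat2_mult (x, 1, 1, 0) (hj_mat xs)"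

lemma hj_mat_append: "hj_mat (xs @ ys) = mat2_mult (hj_mat xs) (hj_mat ys)"
  by (induction xs) (simp_all add: mat2_mult_assoc)

lemma hj_mat_replicate_2: "hj_mat (replicate k 2) = (int k + 1, int k, int k, int k - 1)"
  by (induction k) (simp_all add: algebra_simps)

lemma hj_mat_rev: "hj_mat (rev xs) = mat2_transpose (hj_mat xs)"
  by (induction xs) (simp_all add: hj_mat_append mat2_transpose_mult)

lemma hj_mat_snoc_decrement:
  assumes "hj_mat (xs @ [x]) = (P, Q, R, S)"
  shows "hj_mat (xs @ [x - 1]) = (P - R, Q - S, R, S)"
  using assms by (cases "hj_mat xs" rule: prod_cases4) (auto simp: hj_mat_append algebra_simps)

lemma hj_mat_bounds:
  assumes "\<forall>x\<in>set xs. x \<ge> 2" and "hj_mat xs = (P, Q, R, S)"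
  shows "0 \<le> Q \<and> Q < P \<and> 0 \<le> R \<and> S < R \<and> R < P \<and> 1 \<le> Q - S \<and> Q - S \<le> P - R
    \<and> R * Q - P * S = 1"
  using assms
proof (induction xs arbitrary: P Q R S)
  case Nil
  then show ?case by simp
next
  case (Cons x xs)
  obtain P' Q' R' S' where tail: "hj_mat xs = (P', Q', R', S')"
    by (cases "hj_mat xs" rule: prod_cases4)
  have IH: "0 \<le> Q' \<and> Q' < P' \<and> 0 \<le> R' \<and> S' < R' \<and> R' < P' \<and> 1 \<le> Q' - S'
      \<and> Q' - S' \<le> P' - R' \<and> R' * Q' - P' * S' = 1"
    using Cons tail by simp
  have x: "x \<ge> 2" using Cons.prems by simp
  have "(x - 2) * P' \<ge> 0" "(x - 2) * R' \<ge> 0" "(x - 2) * (P' - R') \<ge> 0"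
    using IH x by simp_all
  moreover have step: "P = x * P' - Q'" "Q = P'" "R = x * R' - S'" "S = R'"
    using Cons.prems tail by auto
  ultimately show ?case unfolding step using IH by (auto simp: algebra_simps)
qed

lemma hjcf_hj_mat:
  assumes "xs \<noteq> []" and "\<forall>x\<in>set xs. x \<ge> 2" and "hj_mat xs = (P, Q, R, S)"
  shows "hjcf (map of_int xs) = of_int P / of_int Q"
  using assms
proof (induction xs arbitrary: P Q R S)
  case Nil
  then show ?case by simp
next
  case (Cons x xs)
  show ?case
  proof (cases xs)
    case Nil
    then show ?thesis using Cons.prems by simp
  next
    case (Cons y ys)
    obtain P' Q' R' S' where tail: "hj_mat xs = (P', Q', R', S')"
      by (cases "hj_mat xs" rule: prod_cases4)
    have "0 \<le> Q'" "Q' < P'"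
      using hj_mat_bounds[OF _ tail] Cons.prems by auto
    moreover have "hjcf (map of_int xs) = of_int P' / of_int Q'"
      using Cons.IH Cons.prems tail \<open>xs = y # ys\<close> by simp
    moreover have step: "P = x * P' - Q'" "Q = P'"
      using Cons.prems tail by auto
    ultimately show ?thesis unfolding step using \<open>xs = y # ys\<close> by (simp add: field_simps)
  qed
qed

lemma hjcf_snoc_decrement:
  assumes "\<forall>x\<in>set xs. x \<ge> 2" and "xs \<noteq> [] \<longrightarrow> last xs > 2"
    and "hj_mat xs = (P, Q, R, S)"
  shows "of_int (P - R) / of_int (Q - S) =
    (if xs \<noteq> [] then hjcf (map of_int (butlast xs) @ [of_int (last xs) - 1]) else 1)"
proof (cases "xs = []")
  case True
  then show ?thesis using assms(3) by auto
next
  case False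
  then have "xs = butlast xs @ [last xs]" by simp
  then have "hj_mat (butlast xs @ [last xs - 1]) = (P - R, Q - S, R, S)"
    using hj_mat_snoc_decrement assms(3) by metis
  moreover have "\<forall>x\<in>set (butlast xs @ [last xs - 1]). x \<ge> 2"
    using assms(1,2) False by (auto dest: in_set_butlastD)
  ultimately show ?thesis
    using hjcf_hj_mat[of "butlast xs @ [last xs - 1]"] False by simp
qed

lemma hjcf_rev:
  assumes "\<forall>x\<in>set xs. x \<ge> 2" and "hj_mat xs = (P, Q, R, S)"
  shows "if xs \<noteq> [] then of_int P / of_int R = hjcf (map of_int (rev xs)) else R = 0"
  using hjcf_hj_mat[of "rev xs" P R Q S] assms by (auto simp: hj_mat_rev)

lemma hj_mat_reduced_fraction:
  fixes p q qi :: int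
  assumes "xs \<noteq> []" and "\<forall>x\<in>set xs. x \<ge> 2" and "hj_mat xs = (P, Q, R, S)"
    and "q > 0" and "coprime p q" and "of_int p / of_int q = hjcf (map of_int xs)"
    and "0 < qi" and "qi < p" and "[q * qi = 1] (mod p)"
  shows "p = P \<and> q = Q \<and> qi = R"
proof -
  have bounds: "0 \<le> Q" "Q < P" "0 \<le> R" "R < P" "R * Q - P * S = 1"
    using hj_mat_bounds[OF assms(2,3)] by auto
  have "coprime P Q"
  proof (rule coprimeI)
    fix d assume "d dvd P" "d dvd Q"
    then have "d dvd R * Q - P * S" by simp
    then show "is_unit d" using bounds by simp
  qed
  have "Q \<noteq> 0"
    using assms(4,6,7,8) hjcf_hj_mat[OF assms(1-3)] by auto
  then have "(of_int (p * Q) :: rat) = of_int (q * P)"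
    using assms(4,6) hjcf_hj_mat[OF assms(1-3)] by (simp add: field_simps)
  then have "p * Q = q * P" by (simp only: of_int_eq_iff)
  then have fraction: "p = P \<and> q = Q"
    using coprime_crossproduct'[of q Q p P] assms(4,5) bounds \<open>coprime P Q\<close> \<open>Q \<noteq> 0\<close>
    by (simp add: ac_simps coprime_commute)
  have "[Q * R = 1] (mod P)"
    using bounds by (simp add: cong_iff_dvd_diff algebra_simps)
  with assms(9) fraction have "[Q * qi = Q * R] (mod P)"
    by (metis cong_sym cong_trans)
  then have "[qi = R] (mod P)"
    using \<open>coprime P Q\<close> by (simp add: cong_mult_lcancel coprime_commute)
  then show ?thesis
    using fraction bounds assms(7,8) by (auto intro: cong_less_imp_eq_int)
qed

text \<open>Write \<open>hj_mat ([2]\<^sup>k) = I + k J\<close> and \<open>hj_mat [m + k] = N + k E\<^sub>1\<^sub>1\<close>.  The matrices \<open>J\<close>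
  and \<open>E\<^sub>1\<^sub>1\<close> have rank one, with \<open>J\<close> having column \<open>(1, 1)\<close> and \<open>E\<^sub>1\<^sub>1\<close> row \<open>(1, 0)\<close>, so the
  coefficient \<open>A J C E\<^sub>1\<^sub>1 B\<close> of \<open>k\<^sup>2\<close> is (sum of the columns of \<open>A\<close>) times \<open>c\<^sub>1 - c\<^sub>2\<close> times
  (first row of \<open>B\<close>).\<close>

lemma hj_mat_quadratic:
  fixes a b c :: "int list" and m :: int
  assumes "hj_mat a = (a1, a2, a3, a4)" and "hj_mat c = (c1, c2, c3, c4)"
    and "hj_mat b = (b1, b2, b3, b4)"
  obtains E1 F1 E2 F2 E3 F3 S where "\<And>k. hj_mat (a @ replicate k 2 @ c @ (m + int k) # b) =
    ((a1 - a3) * (c1 - c2) * b1 * int k ^ 2 + E1 * int k + F1,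
     (a2 - a4) * (c1 - c2) * b1 * int k ^ 2 + E2 * int k + F2,
     (a1 - a3) * (c1 - c2) * b3 * int k ^ 2 + E3 * int k + F3, S k)"
proof -
  let ?N = "(m, 1, 1, 0)" and ?J = "(1, 1, 1, 1)" and ?E11 = "(1, 0, 0, 0)"
  obtain E1 E2 E3 E4 where E: "mat2_mult (hj_mat a)
      (mat2_add (mat2_mult (hj_mat c) (mat2_mult ?E11 (hj_mat b)))
        (mat2_mult ?J (mat2_mult (hj_mat c) (mat2_mult ?N (hj_mat b))))) = (E1, E2, E3, E4)"
    by (metis prod_cases4)
  obtain F1 F2 F3 F4 where F:
      "mat2_mult (hj_mat a) (mat2_mult (hj_mat c) (mat2_mult ?N (hj_mat b))) = (F1, F2, F3, F4)"
    by (metis prod_cases4)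
  have "hj_mat (a @ replicate k 2 @ c @ (m + int k) # b) = mat2_mult (hj_mat a)
      (mat2_mult (int k + 1, int k, int k, int k - 1)
        (mat2_mult (hj_mat c) (mat2_mult (m + int k, 1, 1, 0) (hj_mat b))))" for k
    by (simp add: hj_mat_append hj_mat_replicate_2)
  also have "\<dots> k = mat2_add (mat2_smult (int k ^ 2)
        ((a1 - a3) * (c1 - c2) * b1, (a2 - a4) * (c1 - c2) * b1,
         (a1 - a3) * (c1 - c2) * b3, (a2 - a4) * (c1 - c2) * b3))
      (mat2_add (mat2_smult (int k) (E1, E2, E3, E4)) (F1, F2, F3, F4))" for k
    unfolding E[symmetric] F[symmetric] using assms by (simp add: algebra_simps power2_eq_square)
  finally have family: "hj_mat (a @ replicate k 2 @ c @ (m + int k) # b) = \<dots> k" for k .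
  show thesis
    by (rule that[of E1 F1 E2 F2 E3 F3
          "\<lambda>k. (a2 - a4) * (c1 - c2) * b3 * int k ^ 2 + E4 * int k + F4"])
      (simp only: family mat2_add.simps mat2_smult.simps, simp add: algebra_simps)
qed

theorem lemma3p4:
  fixes a c b :: "int list" and m :: int
  assumes "\<forall>x\<in>set a. x \<ge> 2" and "\<forall>x\<in>set c. x \<ge> 2" and "\<forall>x\<in>set b. x \<ge> 2"
    and "m \<ge> 2"
    and "a \<noteq> [] \<longrightarrow> last a > 2"
  shows "\<exists>d1 e1 f1 d2 e2 f2 d3 e3 f3 :: rat.
    d1 \<noteq> 0 \<and>
    (\<forall>(k::nat) (p::int) (q::int) (qi::int).
       (p > q \<and> q > 0 \<and> coprime p q \<and>
        of_int p / of_int q =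
          hjcf (map of_int a @ replicate k 2 @ map of_int c @ [of_int m + of_nat k] @ map of_int b) \<and>
        0 < qi \<and> qi < p \<and> [q * qi = 1] (mod p))
       \<longrightarrow> of_int p = d1 * of_nat k ^ 2 + e1 * of_nat k + f1
         \<and> of_int q = d2 * of_nat k ^ 2 + e2 * of_nat k + f2
         \<and> of_int qi = d3 * of_nat k ^ 2 + e3 * of_nat k + f3) \<and>
    d1 / d2 = (if a \<noteq> [] then hjcf (map of_int (butlast a) @ [of_int (last a) - 1]) else 1) \<and>
    (if b \<noteq> [] then d1 / d3 = hjcf (map of_int (rev b)) else d3 = 0)"
proof -
  obtain a1 a2 a3 a4 where A: "hj_mat a = (a1, a2, a3, a4)" by (cases "hj_mat a" rule: prod_cases4)
  obtain b1 b2 b3 b4 where B: "hj_mat b = (b1, b2, b3, b4)" by (cases "hj_mat b" rule: prod_cases4)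
  obtain c1 c2 c3 c4 where C: "hj_mat c = (c1, c2, c3, c4)" by (cases "hj_mat c" rule: prod_cases4)
  obtain E1 F1 E2 F2 E3 F3 S where family: "\<And>k. hj_mat (a @ replicate k 2 @ c @ (m + int k) # b) =
    ((a1 - a3) * (c1 - c2) * b1 * int k ^ 2 + E1 * int k + F1,
     (a2 - a4) * (c1 - c2) * b1 * int k ^ 2 + E2 * int k + F2,
     (a1 - a3) * (c1 - c2) * b3 * int k ^ 2 + E3 * int k + F3, S k)"
    by (rule hj_mat_quadratic[OF A C B, of m]) (rule that)
  define d1 where "d1 = rat_of_int ((a1 - a3) * (c1 - c2) * b1)"
  define d2 where "d2 = rat_of_int ((a2 - a4) * (c1 - c2) * b1)"
  define d3 where "d3 = rat_of_int ((a1 - a3) * (c1 - c2) * b3)"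
  have pos: "a1 - a3 > 0" "a2 - a4 > 0" "c1 - c2 > 0" "b1 > 0"
    using hj_mat_bounds[OF assms(1) A] hj_mat_bounds[OF assms(2) C] hj_mat_bounds[OF assms(3) B]
    by auto
  have "\<forall>(k::nat) (p::int) (q::int) (qi::int).
       (p > q \<and> q > 0 \<and> coprime p q \<and>
        of_int p / of_int q =
          hjcf (map of_int a @ replicate k 2 @ map of_int c @ [of_int m + of_nat k] @ map of_int b) \<and>
        0 < qi \<and> qi < p \<and> [q * qi = 1] (mod p))
       \<longrightarrow> of_int p = d1 * of_nat k ^ 2 + of_int E1 * of_nat k + of_int F1
         \<and> of_int q = d2 * of_nat k ^ 2 + of_int E2 * of_nat k + of_int F2
         \<and> of_int qi = d3 * of_nat k ^ 2 + of_int E3 * of_nat k + of_int F3"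
    (is "\<forall>k p q qi. _ \<longrightarrow> ?coeffs k p q qi")
  proof (intro allI impI, elim conjE)
    fix k :: nat and p q qi :: int
    assume "q > 0" "coprime p q" "0 < qi" "qi < p" "[q * qi = 1] (mod p)"
      and "of_int p / of_int q =
        hjcf (map of_int a @ replicate k 2 @ map of_int c @ [of_int m + of_nat k] @ map of_int b)"
    moreover have "\<forall>x\<in>set (a @ replicate k 2 @ c @ (m + int k) # b). x \<ge> 2"
      using assms(1-4) by auto
    ultimately show "?coeffs k p q qi"
      using hj_mat_reduced_fraction[OF _ _ family[of k], of q p qi] unfolding d1_def d2_def d3_def by simp
  qed
  moreover have "d1 \<noteq> 0" using pos by (simp add: d1_def)
  moreover have "d1 / d2 = (if a \<noteq> [] then hjcf (map of_int (butlast a) @ [of_int (last a) - 1]) else 1)"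
    using pos hjcf_snoc_decrement[OF assms(1,5) A] by (simp add: d1_def d2_def)
  moreover have "if b \<noteq> [] then d1 / d3 = hjcf (map of_int (rev b)) else d3 = 0"
    using pos hjcf_rev[OF assms(3) B] by (simp add: d1_def d3_def)
  ultimately show ?thesis
    by (intro exI conjI) assumption+
qed

end
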